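(* Let $n\ge1$. Let $\mathbf{R}$ be a subalgebra of $\mathbf{P\L}_n\times\mathbf{P\L}_n$ with $\mathbf{R}\subseteq{\le}$. Assume $\mathbf{R}$ is not equal to the diagonal $\Delta_{\mathbf{S}}=\{(s,s):s\in S\}$ of any subalgebra $\mathbf{S}$ of $\mathbf{P\L}_n$. Put $S=\mathrm{pr}_1(\mathbf{R})\times\mathrm{pr}_2(\mathbf{R})$. Then $$\lhd\cap S\;\subseteq\;\mathbf{R}\;\subseteq\;{\le}\cap S.$$
   Context: For $n\ge 1$, the algebra $\mathbf{P\L}_n=\langle\{0,\tfrac1n,\dots,\tfrac{n-1}{n},1\},\wedge,\vee,\odot,\oplus,0,1\rangle$ has $\wedge=\min$, $\vee=\max$, $x\odot y=\max\{0,x+y-1\}$ and $x\oplus y=\min\{1,x+y\}$. The order is ${\le}=\{(x,y)\in\mathbf{P\L}_n^2: x\le y\}$. The relation $\lhd$ is $\lhd=\{(x,y)\in\mathbf{P\L}_n^2: x=0\text{ or }y=1\}$. Both $\le$ and $\lhd$ are subalgebras of $\mathbf{P\L}_n\times\mathbf{P\L}_n$. The maps $\mathrm{pr}_1,\mathrm{pr}_2$ are the projections. *)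

theory Defs
  imports Main "HOL.Rat"
begin

definition PL :: "nat \<Rightarrow> rat set" where
  "PL n = {of_nat k / of_nat n | k. k \<le> n}"

definition luk_odot :: "rat \<Rightarrow> rat \<Rightarrow> rat" where
  "luk_odot x y = max 0 (x + y - 1)"

definition luk_oplus :: "rat \<Rightarrow> rat \<Rightarrow> rat" where
  "luk_oplus x y = min 1 (x + y)"

definition is_subalg :: "nat \<Rightarrow> rat set \<Rightarrow> bool" where
  "is_subalg n S \<longleftrightarrow> S \<subseteq> PL n \<and> 0 \<in> S \<and> 1 \<in> S \<and>
     (\<forall>x\<in>S. \<forall>y\<in>S. min x y \<in> S \<and> max x y \<in> S \<and> luk_odot x y \<in> S \<and> luk_oplus x y \<in> S)"

definition is_subalg2 :: "nat \<Rightarrow> (rat \<times> rat) set \<Rightarrow> bool" where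
  "is_subalg2 n R \<longleftrightarrow> R \<subseteq> PL n \<times> PL n \<and> (0, 0) \<in> R \<and> (1, 1) \<in> R \<and>
     (\<forall>(x1, x2)\<in>R. \<forall>(y1, y2)\<in>R.
        (min x1 y1, min x2 y2) \<in> R \<and> (max x1 y1, max x2 y2) \<in> R \<and>
        (luk_odot x1 y1, luk_odot x2 y2) \<in> R \<and> (luk_oplus x1 y1, luk_oplus x2 y2) \<in> R)"

definition leq_rel :: "nat \<Rightarrow> (rat \<times> rat) set" where
  "leq_rel n = {(x, y). x \<in> PL n \<and> y \<in> PL n \<and> x \<le> y}"

definition lhd_rel :: "nat \<Rightarrow> (rat \<times> rat) set" where
  "lhd_rel n = {(x, y). x \<in> PL n \<and> y \<in> PL n \<and> (x = 0 \<or> y = 1)}"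

end

theory Submission
  imports Defs "HOL.Real"
begin

text \<open>
  Since R is contained in the order but is not a diagonal, it contains a pair (c, d) with c < d.
  The operations x \<oplus> x and x \<odot> x double the gap d - c as long as both entries lie on the same
  side of 1/2; when they straddle 1/2, x \<oplus> x sends the pair to (2c, 1). A pair (c, 1) with c < 1
  yields (0, 1) by iterating \<odot>. Finally, intersecting resp. joining the elements of R with (0, 1)
  produces every pair (0, b) with b \<in> pr2(R) and (a, 1) with a \<in> pr1(R).
\<close>

lemma PL_subset_unit_interval: "PL n \<subseteq> {0..1}"
  unfolding PL_def by (auto simp: divide_le_eq_1)

lemma is_subalg2_closed:
  assumes "is_subalg2 n R" "(x1, x2) \<in> R" "(y1, y2) \<in> R"
  shows "(min x1 y1, min x2 y2) \<in> R" "(max x1 y1, max x2 y2) \<in> R"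
    "(luk_odot x1 y1, luk_odot x2 y2) \<in> R" "(luk_oplus x1 y1, luk_oplus x2 y2) \<in> R"
  using assms unfolding is_subalg2_def by fastforce+

lemma is_subalg2_unit_interval:
  assumes "is_subalg2 n R" "(x, y) \<in> R"
  shows "0 \<le> x" "x \<le> 1" "0 \<le> y" "y \<le> 1"
  using assms PL_subset_unit_interval unfolding is_subalg2_def by fastforce+

lemma is_subalg2_zero_one_if_lt_one:
  assumes R: "is_subalg2 n R" and c: "(c, 1) \<in> R" "c < 1"
  shows "(0, 1) \<in> R"
proof -
  have iterate: "(max 0 (1 - of_nat m * (1 - c)), 1) \<in> R" for m
  proof (induction m)
    case 0
    show ?case using R unfolding is_subalg2_def by simp
  next
    case (Suc m)
    have "luk_odot (max 0 (1 - of_nat m * (1 - c))) c = max 0 (1 - of_nat (Suc m) * (1 - c))"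
      using c(2) unfolding luk_odot_def by (auto simp: algebra_simps max_def)
    with is_subalg2_closed(3)[OF R Suc c(1)] show ?case
      by (simp add: luk_odot_def)
  qed
  obtain m where "1 < of_nat m * (1 - c)"
    using ex_less_of_nat_mult[of "1 - c" 1] c(2) by auto
  with iterate[of m] show ?thesis by simp
qed

lemma is_subalg2_zero_one_if_gap:
  assumes R: "is_subalg2 n R"
  shows "(c, d) \<in> R \<Longrightarrow> c < d \<Longrightarrow> 1 \<le> 2 ^ k * (d - c) \<Longrightarrow> (0, 1) \<in> R"
proof (induction k arbitrary: c d)
  case 0
  with is_subalg2_unit_interval[OF R "0.prems"(1)] have "c = 0" "d = 1"
    by simp_all
  with "0.prems" show ?case by simp
next
  case (Suc k)
  have wider_gap: "1 \<le> 2 ^ k * (2 * d - 2 * c)"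
    using Suc.prems(3) by (simp add: algebra_simps)
  consider "2 * d \<le> 1" | "1 \<le> 2 * c" | "2 * c < 1" "1 < 2 * d"
    by linarith
  then show ?case
  proof cases
    case 1
    with Suc.prems(2) have "luk_oplus c c = 2 * c" "luk_oplus d d = 2 * d"
      unfolding luk_oplus_def by auto
    with is_subalg2_closed(4)[OF R Suc.prems(1) Suc.prems(1)] have "(2 * c, 2 * d) \<in> R"
      by simp
    with Suc.IH wider_gap Suc.prems(2) show ?thesis by simp
  next
    case 2
    with Suc.prems(2) have "luk_odot c c = 2 * c - 1" "luk_odot d d = 2 * d - 1"
      unfolding luk_odot_def by auto
    with is_subalg2_closed(3)[OF R Suc.prems(1) Suc.prems(1)] have "(2 * c - 1, 2 * d - 1) \<in> R"
      by simp
    with Suc.IH wider_gap Suc.prems(2) show ?thesis by simp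
  next
    case 3
    then have "luk_oplus c c = 2 * c" "luk_oplus d d = 1"
      unfolding luk_oplus_def by auto
    with is_subalg2_closed(4)[OF R Suc.prems(1) Suc.prems(1)] have "(2 * c, 1) \<in> R"
      by simp
    with is_subalg2_zero_one_if_lt_one[OF R] 3 show ?thesis by blast
  qed
qed

lemma is_subalg2_zero_one_if_lt:
  assumes R: "is_subalg2 n R" and cd: "(c, d) \<in> R" "c < d"
  shows "(0, 1) \<in> R"
proof -
  obtain k :: nat where "1 < of_nat k * (d - c)"
    using ex_less_of_nat_mult[of "d - c" 1] cd(2) by auto
  also have "\<dots> \<le> 2 ^ k * (d - c)"
    using cd(2) by (intro mult_right_mono) (auto intro: less_imp_le)
  finally show ?thesis
    by (rule is_subalg2_zero_one_if_gap[OF R cd less_imp_le])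
qed

lemma is_subalg2_diagonal:
  assumes R: "is_subalg2 n R" and diag: "\<And>x y. (x, y) \<in> R \<Longrightarrow> x = y"
  shows "is_subalg n (fst ` R)" "R = {(s, s) | s. s \<in> fst ` R}"
proof -
  have diag_iff: "x \<in> fst ` R \<longleftrightarrow> (x, x) \<in> R" for x
    using diag by force
  show "R = {(s, s) | s. s \<in> fst ` R}"
    using diag diag_iff by auto
  show "is_subalg n (fst ` R)"
    unfolding is_subalg_def
  proof (intro conjI ballI)
    show "fst ` R \<subseteq> PL n" "0 \<in> fst ` R" "1 \<in> fst ` R"
      using R unfolding is_subalg2_def by force+
  next
    fix x y assume "x \<in> fst ` R" "y \<in> fst ` R"
    then have "(x, x) \<in> R" "(y, y) \<in> R"
      using diag_iff by blast+
    from is_subalg2_closed[OF R this]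
    show "min x y \<in> fst ` R" "max x y \<in> fst ` R"
      "luk_odot x y \<in> fst ` R" "luk_oplus x y \<in> fst ` R"
      by (simp_all add: diag_iff)
  qed
qed

lemma is_subalg2_lhd_subset:
  assumes R: "is_subalg2 n R" and zero_one: "(0, 1) \<in> R"
  shows "lhd_rel n \<inter> (fst ` R \<times> snd ` R) \<subseteq> R"
proof
  fix p assume "p \<in> lhd_rel n \<inter> (fst ` R \<times> snd ` R)"
  then obtain a b a' b' where p: "p = (a, b)" and ab: "(a, b) \<in> lhd_rel n"
    and aR: "(a, a') \<in> R" and bR: "(b', b) \<in> R"
    by force
  from ab consider "a = 0" | "b = 1"
    unfolding lhd_rel_def by blast
  then show "p \<in> R"
  proof cases
    case 1
    with is_subalg2_closed(1)[OF R zero_one bR] is_subalg2_unit_interval[OF R bR]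
    show ?thesis by (simp add: p)
  next
    case 2
    with is_subalg2_closed(2)[OF R zero_one aR] is_subalg2_unit_interval[OF R aR]
    show ?thesis by (simp add: p)
  qed
qed

theorem lemma3p9:
  fixes n :: nat and R :: "(rat \<times> rat) set"
  assumes "n \<ge> 1"
    and "is_subalg2 n R"
    and "R \<subseteq> leq_rel n"
    and "\<forall>S. is_subalg n S \<longrightarrow> R \<noteq> {(s, s) | s. s \<in> S}"
  shows "lhd_rel n \<inter> ((fst ` R) \<times> (snd ` R)) \<subseteq> R \<and> R \<subseteq> leq_rel n \<inter> ((fst ` R) \<times> (snd ` R))"
proof -
  have "\<exists>c d. (c, d) \<in> R \<and> c < d"
  proof (rule ccontr)
    assume "\<nexists>c d. (c, d) \<in> R \<and> c < d"
    with assms(3) have "\<And>x y. (x, y) \<in> R \<Longrightarrow> x = y"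
      unfolding leq_rel_def by fastforce
    with is_subalg2_diagonal[OF assms(2)] assms(4) show False by blast
  qed
  then obtain c d where "(c, d) \<in> R" "c < d" by blast
  with is_subalg2_zero_one_if_lt[OF assms(2)] have "(0, 1) \<in> R" .
  with is_subalg2_lhd_subset[OF assms(2)] assms(3) show ?thesis by force
qed

end
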